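(* Let $H$ be a group with a metric $d$ and $r\ge3$ an integer. For every sequence $\beta_0=0<\beta_1<3\beta_1<\beta_2<3\beta_2<\cdots<\beta_{r-1}<3\beta_{r-1}<\beta_r$ we have $$H^r=\Delta(\beta_r)\cup\Big(\bigcup_{j=0}^{r-1}\ \bigcup_{\mathcal{Q}:\,|\mathcal{Q}|\ge2}\Delta_{\mathcal{Q}}(3\beta_j,\beta_{j+1})\Big),$$ where $\mathcal{Q}$ ranges over partitions of $[r]=\{1,\dots,r\}$ with at least two blocks.
   Context: For $\underline h=(h_1,\dots,h_r)\in H^r$ and $I,J\subset[r]$: $d^I(\underline h)=\max\{d(h_i,h_j):i,j\in I\}$, $d_{I,J}(\underline h)=\min\{d(h_i,h_j):i\in I,j\in J\}$. For a partition $\mathcal{Q}$ of $[r]$: $d^{\mathcal{Q}}(\underline h)=\max_{I\in\mathcal{Q}}d^I(\underline h)$, $d_{\mathcal{Q}}(\underline h)=\min\{d_{I,J}(\underline h):I\ne J,\ I,J\in\mathcal{Q}\}$, and $\Delta_{\mathcal{Q}}(\alpha,\beta)=\{\underline h\in H^r:d^{\mathcal{Q}}(\underline h)\le\alpha,\ d_{\mathcal{Q}}(\underline h)>\beta\}$. Also $\Delta(\beta)=\{\underline h\in H^r:\max_{i,j}d(h_i,h_j)\le\beta\}$. *)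

theory Defs
  imports Complex_Main "HOL-Algebra.Group" "HOL-Library.Disjoint_Sets"
begin

definition metric_on :: "'a set \<Rightarrow> ('a \<Rightarrow> 'a \<Rightarrow> real) \<Rightarrow> bool" where
  "metric_on S d \<longleftrightarrow>
     (\<forall>x\<in>S. \<forall>y\<in>S. 0 \<le> d x y \<and> (d x y = 0 \<longleftrightarrow> x = y) \<and> d x y = d y x) \<and>
     (\<forall>x\<in>S. \<forall>y\<in>S. \<forall>z\<in>S. d x z \<le> d x y + d y z)"

text \<open>Tuples in H^r are functions on [r] = {1..r}.\<close>
definition dsup :: "('a \<Rightarrow> 'a \<Rightarrow> real) \<Rightarrow> nat set \<Rightarrow> (nat \<Rightarrow> 'a) \<Rightarrow> real" where
  "dsup d I h = Max {d (h i) (h j) | i j. i \<in> I \<and> j \<in> I}"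

definition dinf :: "('a \<Rightarrow> 'a \<Rightarrow> real) \<Rightarrow> nat set \<Rightarrow> nat set \<Rightarrow> (nat \<Rightarrow> 'a) \<Rightarrow> real" where
  "dinf d I J h = Min {d (h i) (h j) | i j. i \<in> I \<and> j \<in> J}"

definition dsupQ :: "('a \<Rightarrow> 'a \<Rightarrow> real) \<Rightarrow> nat set set \<Rightarrow> (nat \<Rightarrow> 'a) \<Rightarrow> real" where
  "dsupQ d Q h = Max {dsup d I h | I. I \<in> Q}"

definition dinfQ :: "('a \<Rightarrow> 'a \<Rightarrow> real) \<Rightarrow> nat set set \<Rightarrow> (nat \<Rightarrow> 'a) \<Rightarrow> real" where
  "dinfQ d Q h = Min {dinf d I J h | I J. I \<in> Q \<and> J \<in> Q \<and> I \<noteq> J}"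

definition tuples :: "'a set \<Rightarrow> nat \<Rightarrow> (nat \<Rightarrow> 'a) set" where
  "tuples H r = PiE {1..r} (\<lambda>_. H)"

definition DeltaQ :: "'a set \<Rightarrow> ('a \<Rightarrow> 'a \<Rightarrow> real) \<Rightarrow> nat \<Rightarrow> nat set set \<Rightarrow> real \<Rightarrow> real \<Rightarrow> (nat \<Rightarrow> 'a) set" where
  "DeltaQ H d r Q \<alpha> \<beta> = {h \<in> tuples H r. dsupQ d Q h \<le> \<alpha> \<and> dinfQ d Q h > \<beta>}"

definition Delta :: "'a set \<Rightarrow> ('a \<Rightarrow> 'a \<Rightarrow> real) \<Rightarrow> nat \<Rightarrow> real \<Rightarrow> (nat \<Rightarrow> 'a) set" where
  "Delta H d r \<beta> = {h \<in> tuples H r. dsup d {1..r} h \<le> \<beta>}"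

end

theory Submission
  imports Defs
begin

text \<open>Start from the partition of [r] into singletons, whose blocks have diameter 0 = 3 \<beta> 0.
  At scale j, if two blocks contain points at distance at most \<beta> (j + 1), merge them: by the
  triangle inequality the merged block has diameter at most 3 \<beta> j + \<beta> (j + 1) + 3 \<beta> j, which
  is at most 3 \<beta> (j + 1). Otherwise the current partition Q witnesses membership in
  \<Delta>_Q(3 \<beta> j, \<beta> (j + 1)), unless it has a single block, in which case the tuple lies in
  \<Delta>(\<beta> r). Each merge lowers the number of blocks, so after r - 1 scales one of the two
  alternatives must have occurred.\<close>

definition clustered :: "('a \<Rightarrow> 'a \<Rightarrow> real) \<Rightarrow> (nat \<Rightarrow> 'a) \<Rightarrow> nat set set \<Rightarrow> real \<Rightarrow> bool" where
  "clustered d h P c \<longleftrightarrow> (\<forall>I\<in>P. \<forall>i\<in>I. \<forall>k\<in>I. d (h i) (h k) \<le> c)"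

lemma clustered_mono: "clustered d h P c \<Longrightarrow> c \<le> c' \<Longrightarrow> clustered d h P c'"
  unfolding clustered_def by force

lemma tuples_memD: "h \<in> tuples S r \<Longrightarrow> i \<in> {1..r} \<Longrightarrow> h i \<in> S"
  by (auto simp: tuples_def)

lemma dsup_le:
  assumes "finite I" "I \<noteq> {}" "\<forall>i\<in>I. \<forall>k\<in>I. d (h i) (h k) \<le> c"
  shows "dsup d I h \<le> c"
proof -
  have "{d (h i) (h j) | i j. i \<in> I \<and> j \<in> I} = (\<lambda>(i, j). d (h i) (h j)) ` (I \<times> I)"
    by auto
  then show ?thesis
    unfolding dsup_def using assms by (subst Max_le_iff) auto
qed

lemma dinf_gt:
  assumes "finite I" "finite J" "I \<noteq> {}" "J \<noteq> {}" "\<forall>i\<in>I. \<forall>k\<in>J. c < d (h i) (h k)"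
  shows "c < dinf d I J h"
proof -
  have "{d (h i) (h j) | i j. i \<in> I \<and> j \<in> J} = (\<lambda>(i, j). d (h i) (h j)) ` (I \<times> J)"
    by auto
  then show ?thesis
    unfolding dinf_def using assms by (subst Min_gr_iff) auto
qed

lemma dsupQ_le:
  assumes "finite P" "P \<noteq> {}" "\<forall>I\<in>P. dsup d I h \<le> c"
  shows "dsupQ d P h \<le> c"
proof -
  have "{dsup d I h | I. I \<in> P} = (\<lambda>I. dsup d I h) ` P" by auto
  then show ?thesis
    unfolding dsupQ_def using assms by (subst Max_le_iff) auto
qed

lemma dinfQ_gt:
  assumes "finite P" "I\<^sub>0 \<in> P" "J\<^sub>0 \<in> P" "I\<^sub>0 \<noteq> J\<^sub>0"
    and "\<forall>I\<in>P. \<forall>J\<in>P. I \<noteq> J \<longrightarrow> c < dinf d I J h"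
  shows "c < dinfQ d P h"
proof -
  let ?pairs = "{(I, J). I \<in> P \<and> J \<in> P \<and> I \<noteq> J}"
  have "{dinf d I J h | I J. I \<in> P \<and> J \<in> P \<and> I \<noteq> J} = (\<lambda>(I, J). dinf d I J h) ` ?pairs"
    by auto
  moreover have "finite ?pairs"
    by (rule finite_subset[of _ "P \<times> P"]) (use assms in auto)
  ultimately show ?thesis
    unfolding dinfQ_def using assms by (subst Min_gr_iff) auto
qed

lemma Delta_mono: "c \<le> c' \<Longrightarrow> Delta S d r c \<subseteq> Delta S d r c'"
  by (auto simp: Delta_def)

lemma partition_on_merge:
  assumes "partition_on A P" "I \<in> P" "J \<in> P"
  shows "partition_on A (insert (I \<union> J) (P - {I, J}))"
proof (rule partition_onI)
  show "\<Union>(insert (I \<union> J) (P - {I, J})) = A" "{} \<notin> insert (I \<union> J) (P - {I, J})"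
    using assms by (auto simp: partition_on_def)
next
  fix p q assume "p \<in> insert (I \<union> J) (P - {I, J})" "q \<in> insert (I \<union> J) (P - {I, J})" "p \<noteq> q"
  then show "disjnt p q"
    using assms unfolding partition_on_def disjoint_def disjnt_def by blast
qed

lemma card_merge_less:
  assumes "finite P" "I \<in> P" "J \<in> P" "I \<noteq> J"
  shows "card (insert (I \<union> J) (P - {I, J})) < card P"
proof -
  have "card {I, J} \<le> card P"
    using assms by (intro card_mono) auto
  moreover have "card (insert (I \<union> J) (P - {I, J})) \<le> Suc (card (P - {I, J}))"
    by (rule card_insert_le_m1) auto
  ultimately show ?thesis
    using assms by (simp add: card_Diff_subset)
qed

lemma card_partition_on_pos:
  assumes "partition_on A P" "finite A" "A \<noteq> {}"
  shows "0 < card P"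
  using assms finite_elements[OF assms(2,1)] by (auto simp: card_gt_0_iff partition_on_def)

lemma clustered_merge:
  assumes d: "metric_on S d" and hS: "h ` \<Union>P \<subseteq> S" and cl: "clustered d h P c"
    and I: "I \<in> P" and J: "J \<in> P" and i: "i \<in> I" and k: "k \<in> J"
    and close: "d (h i) (h k) \<le> b"
  shows "clustered d h (insert (I \<union> J) (P - {I, J})) (2 * c + b)"
proof -
  have mem: "h x \<in> S" if "x \<in> I \<union> J" for x
    using hS I J that by blast
  have sym: "d (h x) (h y) = d (h y) (h x)" if "x \<in> I \<union> J" "y \<in> I \<union> J" for x y
    using d mem[OF that(1)] mem[OF that(2)] by (simp add: metric_on_def)
  have "d (h i) (h i) \<le> c"
    using cl I i unfolding clustered_def by blast
  moreover have "d (h i) (h i) = 0" "0 \<le> d (h i) (h k)"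
    using d mem i k unfolding metric_on_def by auto
  ultimately have "0 \<le> c" "0 \<le> b"
    using close by linarith+
  have cross: "d (h x) (h y) \<le> 2 * c + b" if x: "x \<in> I" and y: "y \<in> J" for x y
  proof -
    have "d (h x) (h y) \<le> d (h x) (h i) + d (h i) (h y)"
      using d mem x i y unfolding metric_on_def by blast
    also have "d (h i) (h y) \<le> d (h i) (h k) + d (h k) (h y)"
      using d mem i k y unfolding metric_on_def by blast
    moreover have "d (h x) (h i) \<le> c" "d (h k) (h y) \<le> c"
      using cl I J x y i k unfolding clustered_def by blast+
    ultimately show ?thesis
      using close by linarith
  qed
  have others: "d (h x) (h y) \<le> 2 * c + b" if "K \<in> P" "x \<in> K" "y \<in> K" for K x y
    using cl that \<open>0 \<le> c\<close> \<open>0 \<le> b\<close> unfolding clustered_def by fastforce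
  have merged: "d (h x) (h y) \<le> 2 * c + b" if "x \<in> I \<union> J" "y \<in> I \<union> J" for x y
    using that others[OF I] others[OF J] cross[of x y] cross[of y x] sym[OF that] by auto
  show ?thesis
    unfolding clustered_def using merged others by blast
qed

lemma Delta_if_single_block:
  assumes h: "h \<in> tuples S r" and P: "partition_on {1..r} P" and "card P = 1"
    and cl: "clustered d h P c"
  shows "h \<in> Delta S d r c"
proof -
  obtain I where "P = {I}"
    using \<open>card P = 1\<close> by (rule card_1_singletonE)
  with P have "I = {1..r}" "{1..r} \<noteq> {}"
    by (auto simp: partition_on_def)
  with cl \<open>P = {I}\<close> have "dsup d {1..r} h \<le> c"
    by (intro dsup_le) (auto simp: clustered_def)
  with h show ?thesis
    by (simp add: Delta_def)
qed

lemma DeltaQ_if_separated: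
  assumes h: "h \<in> tuples S r" and P: "partition_on {1..r} P" and "2 \<le> card P"
    and cl: "clustered d h P c"
    and far: "\<forall>I\<in>P. \<forall>J\<in>P. I \<noteq> J \<longrightarrow> (\<forall>i\<in>I. \<forall>k\<in>J. b < d (h i) (h k))"
  shows "h \<in> DeltaQ S d r P c b"
proof -
  have fin: "finite P"
    using finite_elements[OF _ P] by simp
  have blocks: "finite I" "I \<noteq> {}" if "I \<in> P" for I
    using P that finite_subset[of I "{1..r}"] by (auto simp: partition_on_def)
  obtain I\<^sub>0 J\<^sub>0 where "I\<^sub>0 \<in> P" "J\<^sub>0 \<in> P" "I\<^sub>0 \<noteq> J\<^sub>0"
    using \<open>2 \<le> card P\<close> fin card_le_Suc0_iff_eq[of P] by (metis not_less_eq_eq numeral_2_eq_2)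
  have "dsupQ d P h \<le> c"
    using cl blocks \<open>I\<^sub>0 \<in> P\<close> by (intro dsupQ_le fin dsup_le ballI) (auto simp: clustered_def)
  moreover have "b < dinfQ d P h"
    using far blocks by (intro dinfQ_gt[OF fin \<open>I\<^sub>0 \<in> P\<close> \<open>J\<^sub>0 \<in> P\<close> \<open>I\<^sub>0 \<noteq> J\<^sub>0\<close>] ballI impI dinf_gt) auto
  ultimately show ?thesis
    using h by (simp add: DeltaQ_def)
qed

lemma separated_or_merge:
  assumes d: "metric_on S d" and h: "h \<in> tuples S r" and P: "partition_on {1..r} P"
    and "2 \<le> card P" and cl: "clustered d h P c"
  shows "h \<in> DeltaQ S d r P c b \<or>
    (\<exists>P'. partition_on {1..r} P' \<and> card P' < card P \<and> clustered d h P' (2 * c + b))"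
proof (cases "\<exists>I\<in>P. \<exists>J\<in>P. I \<noteq> J \<and> (\<exists>i\<in>I. \<exists>k\<in>J. d (h i) (h k) \<le> b)")
  case True
  then obtain I J i k where IJ: "I \<in> P" "J \<in> P" "I \<noteq> J"
    and ik: "i \<in> I" "k \<in> J" "d (h i) (h k) \<le> b"
    by blast
  have "h ` \<Union>P \<subseteq> S"
    using P h tuples_memD unfolding partition_on_def by blast
  then have "clustered d h (insert (I \<union> J) (P - {I, J})) (2 * c + b)"
    using clustered_merge[OF d _ cl IJ(1,2) ik] by simp
  moreover have "partition_on {1..r} (insert (I \<union> J) (P - {I, J}))"
    using partition_on_merge[OF P IJ(1,2)] .
  moreover have "card (insert (I \<union> J) (P - {I, J})) < card P"
    using card_merge_less[OF finite_elements[OF _ P] IJ] by simp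
  ultimately show ?thesis
    by blast
next
  case False
  then have "\<forall>I\<in>P. \<forall>J\<in>P. I \<noteq> J \<longrightarrow> (\<forall>i\<in>I. \<forall>k\<in>J. b < d (h i) (h k))"
    by (auto simp: not_le)
  then show ?thesis
    using DeltaQ_if_separated[OF h P \<open>2 \<le> card P\<close> cl] by blast
qed

lemma nonneg_if_triple_less:
  fixes \<beta> :: "nat \<Rightarrow> real"
  assumes "0 \<le> \<beta> 0" "\<forall>j<n. 3 * \<beta> j < \<beta> (Suc j)" "j \<le> n"
  shows "0 \<le> \<beta> j"
  using assms(3)
proof (induction j)
  case (Suc j)
  then have "0 \<le> \<beta> j" "3 * \<beta> j < \<beta> (Suc j)"
    using assms(2) by simp_all
  then show ?case
    by linarith
qed (use assms(1) in simp)

lemma separated_or_clustered: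
  fixes \<beta> :: "nat \<Rightarrow> real"
  assumes d: "metric_on S d" and h: "h \<in> tuples S r" and "1 \<le> r"
    and "0 \<le> \<beta> 0" and \<beta>: "\<forall>j<n. 3 * \<beta> j < \<beta> (Suc j)"
  shows "(\<exists>j<n. \<exists>Q. partition_on {1..r} Q \<and> 2 \<le> card Q \<and> h \<in> DeltaQ S d r Q (3 * \<beta> j) (\<beta> (Suc j)))
    \<or> h \<in> Delta S d r (3 * \<beta> n)
    \<or> (\<exists>P. partition_on {1..r} P \<and> card P + n \<le> r \<and> clustered d h P (3 * \<beta> n))"
  using \<beta>
proof (induction n)
  case 0
  let ?P = "(\<lambda>i. {i}) ` {1..r}"
  have "card ?P = r"
    by (simp add: card_image)
  moreover have "d (h i) (h i) = 0" if "i \<in> {1..r}" for i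
    using d tuples_memD[OF h that] by (simp add: metric_on_def)
  then have "clustered d h ?P (3 * \<beta> 0)"
    using \<open>0 \<le> \<beta> 0\<close> by (auto simp: clustered_def)
  ultimately show ?case
    using partition_on_singletons[of "{1..r}"] by auto
next
  case (Suc n)
  have step: "3 * \<beta> n < \<beta> (Suc n)"
    using Suc.prems by simp
  have "0 \<le> \<beta> n"
    using nonneg_if_triple_less[OF \<open>0 \<le> \<beta> 0\<close> Suc.prems] by simp
  with step have widen: "Delta S d r (3 * \<beta> n) \<subseteq> Delta S d r (3 * \<beta> (Suc n))"
    by (intro Delta_mono) simp
  have "\<forall>j<n. 3 * \<beta> j < \<beta> (Suc j)"
    using Suc.prems by simp
  with Suc.IH consider
      (caught) j Q where "j < n" "partition_on {1..r} Q" "2 \<le> card Q"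
        "h \<in> DeltaQ S d r Q (3 * \<beta> j) (\<beta> (Suc j))"
    | (Delta) "h \<in> Delta S d r (3 * \<beta> n)"
    | (clustered) P where "partition_on {1..r} P" "card P + n \<le> r" "clustered d h P (3 * \<beta> n)"
    by blast
  then show ?case
  proof cases
    case caught
    then show ?thesis
      using less_SucI by blast
  next
    case Delta
    then show ?thesis
      using widen by blast
  next
    case clustered
    have "0 < card P"
      using card_partition_on_pos[OF clustered(1)] \<open>1 \<le> r\<close> by simp
    then consider "card P = 1" | "2 \<le> card P"
      by linarith
    then show ?thesis
    proof cases
      case 1
      then show ?thesis
        using Delta_if_single_block[OF h clustered(1) _ clustered(3)] widen by blast
    next
      case 2
      have "2 * (3 * \<beta> n) + \<beta> (Suc n) \<le> 3 * \<beta> (Suc n)"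
        using step by simp
      note separated_or_merge[OF d h clustered(1) 2 clustered(3), of "\<beta> (Suc n)"]
      then show ?thesis
      proof (elim disjE exE conjE)
        assume "h \<in> DeltaQ S d r P (3 * \<beta> n) (\<beta> (Suc n))"
        then show ?thesis
          using 2 clustered(1) by blast
      next
        fix P' assume P': "partition_on {1..r} P'" "card P' < card P"
          "clustered d h P' (2 * (3 * \<beta> n) + \<beta> (Suc n))"
        have "clustered d h P' (3 * \<beta> (Suc n))"
          using clustered_mono[OF P'(3)] step by simp
        moreover have "card P' + Suc n \<le> r"
          using P'(2) clustered(2) by simp
        ultimately show ?thesis
          using P'(1) by blast
      qed
    qed
  qed
qed

theorem proposition6p2:
  fixes G :: "('a, 'b) monoid_scheme" and d :: "'a \<Rightarrow> 'a \<Rightarrow> real"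
    and r :: nat and \<beta> :: "nat \<Rightarrow> real"
  assumes "group G"
    and "metric_on (carrier G) d"
    and "r \<ge> 3"
    and "\<beta> 0 = 0" and "\<beta> 0 < \<beta> 1"
    and "\<forall>j\<in>{1..r-1}. \<beta> j < 3 * \<beta> j \<and> 3 * \<beta> j < \<beta> (Suc j)"
  shows "tuples (carrier G) r =
           Delta (carrier G) d r (\<beta> r) \<union>
           (\<Union>j\<in>{0..r-1}. \<Union>Q\<in>{Q. partition_on {1..r} Q \<and> card Q \<ge> 2}.
              DeltaQ (carrier G) d r Q (3 * \<beta> j) (\<beta> (Suc j)))"
    (is "_ = ?R")
proof (intro equalityI subsetI)
  fix h assume h: "h \<in> tuples (carrier G) r"
  have \<beta>: "3 * \<beta> j < \<beta> (Suc j)" if "j < r" for j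
    using assms(4-6) that by (cases "j = 0") auto
  have "1 \<le> r" "0 \<le> \<beta> 0" "\<forall>j<r - 1. 3 * \<beta> j < \<beta> (Suc j)"
    using assms(3,4) \<beta> by simp_all
  note cases = separated_or_clustered[OF assms(2) h this]
  have widen: "Delta (carrier G) d r (3 * \<beta> (r - 1)) \<subseteq> Delta (carrier G) d r (\<beta> r)"
    using \<beta>[of "r - 1"] \<open>1 \<le> r\<close> by (intro Delta_mono) simp
  have "h \<in> Delta (carrier G) d r (\<beta> r)"
    if "partition_on {1..r} P" "card P + (r - 1) \<le> r" "clustered d h P (3 * \<beta> (r - 1))" for P
  proof -
    have "card P = 1"
      using card_partition_on_pos[OF that(1)] that(2) \<open>1 \<le> r\<close> by simp
    then show ?thesis
      using Delta_if_single_block[OF h that(1) _ that(3)] widen by blast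
  qed
  then show "h \<in> ?R"
    using cases widen \<beta> by force
qed (auto simp: Delta_def DeltaQ_def)

end
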